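(* Let $(S,* )$ be a finite cycle set and let $k\ge 1$. Let $S^{[k]}=\{s^{[k]}: s\in S\}\subseteq M$ and define $s^{[k]}\star t^{[k]}=\big(\psi_k(s)(t)\big)^{[k]}$ for $s,t\in S$. Then $(S^{[k]},\star)$ is a cycle set.
   Context: A cycle set is a set $S$ with a binary operation $*$ such that each $t\mapsto s*t$ is bijective and $(s*t)*(s*u)=(t*s)*(t*u)$ for all $s,t,u$. Write $S=\{s_1,\dots,s_n\}$, let $\psi(s)\in\mathfrak S_n$ satisfy $s_i*s_j=s_{\psi(s_i)(j)}$ (we write $\psi(s)(s_j)=s_{\psi(s)(j)}$), and $T(s)=s*s$. The structure monoid $M$ is the monoid with presentation $\langle S\mid s(s*t)=t(t*s),\ s\ne t\rangle$. For $s\in S$, $k\ge0$: $s^{[k]}=s\,T(s)\,T^2(s)\cdots T^{k-1}(s)\in M$ and $\psi_k(s)=\psi(T^{k-1}(s))\circ\cdots\circ\psi(T(s))\circ\psi(s)$. For $k\ge1$ the map $s\mapsto s^{[k]}$ is injective, so $\star$ is well defined. *)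

theory Defs
  imports Main
begin

definition cycle_set :: "'a set \<Rightarrow> ('a \<Rightarrow> 'a \<Rightarrow> 'a) \<Rightarrow> bool" where
  "cycle_set X op \<longleftrightarrow>
     (\<forall>s\<in>X. bij_betw (op s) X X) \<and>
     (\<forall>s\<in>X. \<forall>t\<in>X. \<forall>u\<in>X. op (op s t) (op s u) = op (op t s) (op t u))"

definition Tmap :: "('a \<Rightarrow> 'a \<Rightarrow> 'a) \<Rightarrow> 'a \<Rightarrow> 'a" where
  "Tmap op s = op s s"

text \<open>The congruence on words (lists) over S generated by s(s*t) = t(t*s), s \<noteq> t.
 Its classes of words in lists S are the elements of the structure monoid M.\<close>
inductive mrel :: "'a set \<Rightarrow> ('a \<Rightarrow> 'a \<Rightarrow> 'a) \<Rightarrow> 'a list \<Rightarrow> 'a list \<Rightarrow> bool"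
  for S op where
  base: "\<lbrakk>xs \<in> lists S; ys \<in> lists S; s \<in> S; t \<in> S; s \<noteq> t\<rbrakk> \<Longrightarrow>
         mrel S op (xs @ [s, op s t] @ ys) (xs @ [t, op t s] @ ys)"
| refl: "mrel S op w w"
| sym: "mrel S op u w \<Longrightarrow> mrel S op w u"
| trans: "mrel S op u v \<Longrightarrow> mrel S op v w \<Longrightarrow> mrel S op u w"

definition mclass :: "'a set \<Rightarrow> ('a \<Rightarrow> 'a \<Rightarrow> 'a) \<Rightarrow> 'a list \<Rightarrow> 'a list set" where
  "mclass S op w = {v. mrel S op w v}"

definition bracket :: "'a set \<Rightarrow> ('a \<Rightarrow> 'a \<Rightarrow> 'a) \<Rightarrow> nat \<Rightarrow> 'a \<Rightarrow> 'a list set" where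
  "bracket S op k s = mclass S op (map (\<lambda>i. (Tmap op ^^ i) s) [0..<k])"

definition bracket_set :: "'a set \<Rightarrow> ('a \<Rightarrow> 'a \<Rightarrow> 'a) \<Rightarrow> nat \<Rightarrow> 'a list set set" where
  "bracket_set S op k = bracket S op k ` S"

fun psik :: "('a \<Rightarrow> 'a \<Rightarrow> 'a) \<Rightarrow> nat \<Rightarrow> 'a \<Rightarrow> 'a \<Rightarrow> 'a" where
  "psik op 0 s = id"
| "psik op (Suc k) s = op ((Tmap op ^^ k) s) \<circ> psik op k s"

definition star :: "'a set \<Rightarrow> ('a \<Rightarrow> 'a \<Rightarrow> 'a) \<Rightarrow> nat \<Rightarrow> 'a list set \<Rightarrow> 'a list set \<Rightarrow> 'a list set" where
  "star S op k x y =
     (let s = the_inv_into S (bracket S op k) x;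
          t = the_inv_into S (bracket S op k) y
      in bracket S op k (psik op k s t))"

end

theory Submission
  imports Defs "HOL-Library.Multiset"
begin

text \<open>To a word over S attach the multiset \<mu> given by \<mu>([]) = 0 and
  \<mu>(x w) = {x} + (x \ -)(\<mu>(w)), where x \ - is the inverse of x * -. The relations
  s (s*t) = t (t*s) preserve \<mu>. Conversely, two words with equal \<mu> act equally on S, the
  letter x acting as x * -: induct on the length; if the first letters x \<noteq> y differ, both
  tails can be replaced by words starting with x*y resp. y*x followed by a common word, and
  the cycle set identity (x*y)*(x*u) = (y*x)*(y*u) closes the induction.
  The word s T(s) ... T^(k-1)(s) of s^[k] has \<mu> = k s, so s \<mapsto> s^[k] is injective for
  k \<ge> 1, and it acts as \<psi>_k(s). The words of s^[k] (\<psi>_k(s)(t))^[k] and t^[k] (\<psi>_k(t)(s))^[k]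
  both have \<mu> = k s + k t, and comparing their actions gives the cycle set identity for
  \<psi>_k. So (S, \<psi>_k) is a cycle set, and \<star> is its transport along s \<mapsto> s^[k].\<close>

lemma cycle_set_image:
  assumes cs: "cycle_set S op" and inj: "inj_on f S"
    and hom: "\<And>s t. s \<in> S \<Longrightarrow> t \<in> S \<Longrightarrow> op' (f s) (f t) = f (op s t)"
  shows "cycle_set (f ` S) op'"
  unfolding cycle_set_def
proof (intro conjI ballI)
  have f_bij: "bij_betw f S (f ` S)"
    using inj by (simp add: bij_betw_def)
  fix x assume "x \<in> f ` S"
  then obtain s where s: "s \<in> S" "x = f s" by blast
  have "bij_betw (f \<circ> op s) S (f ` S)"
    using cs s(1) f_bij by (auto simp: cycle_set_def intro: bij_betw_trans)
  moreover have "bij_betw (f \<circ> op s) S (f ` S) = bij_betw (op' x \<circ> f) S (f ` S)"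
    using s hom by (intro bij_betw_cong) simp
  ultimately show "bij_betw (op' x) (f ` S) (f ` S)"
    using bij_betw_comp_iff[OF f_bij] by blast
next
  fix x y z assume "x \<in> f ` S" "y \<in> f ` S" "z \<in> f ` S"
  then obtain s t u where "s \<in> S" "t \<in> S" "u \<in> S" "x = f s" "y = f t" "z = f u" by blast
  moreover have "op s t \<in> S" "op s u \<in> S" "op t s \<in> S" "op t u \<in> S"
    using cs \<open>s \<in> S\<close> \<open>t \<in> S\<close> \<open>u \<in> S\<close> by (auto simp: cycle_set_def bij_betw_apply)
  ultimately show "op' (op' x y) (op' x z) = op' (op' y x) (op' y z)"
    using cs by (simp add: hom cycle_set_def)
qed

abbreviation bracket_word :: "('a \<Rightarrow> 'a \<Rightarrow> 'a) \<Rightarrow> nat \<Rightarrow> 'a \<Rightarrow> 'a list" where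
  "bracket_word op n s \<equiv> map (\<lambda>i. (Tmap op ^^ i) s) [0..<n]"

lemma bracket_word_Suc: "bracket_word op (Suc n) s = s # bracket_word op n (Tmap op s)"
  by (simp add: map_upt_Suc funpow_Suc_right del: upt_Suc funpow.simps)

lemma star_bracket:
  assumes "inj_on (bracket S op k) S" "s \<in> S" "t \<in> S"
  shows "star S op k (bracket S op k s) (bracket S op k t) = bracket S op k (psik op k s t)"
  using assms by (simp add: star_def the_inv_into_f_f)

locale cycle_set_locale =
  fixes S :: "'a set" and op :: "'a \<Rightarrow> 'a \<Rightarrow> 'a"
  assumes cycle_set: "cycle_set S op"
begin

lemma bij_op: "s \<in> S \<Longrightarrow> bij_betw (op s) S S"
  using cycle_set unfolding cycle_set_def by blast

lemma cycle_identity: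
  "s \<in> S \<Longrightarrow> t \<in> S \<Longrightarrow> u \<in> S \<Longrightarrow> op (op s t) (op s u) = op (op t s) (op t u)"
  using cycle_set unfolding cycle_set_def by blast

lemma op_closed [simp]: "s \<in> S \<Longrightarrow> t \<in> S \<Longrightarrow> op s t \<in> S"
  using bij_op bij_betw_apply by metis

definition ldiv :: "'a \<Rightarrow> 'a \<Rightarrow> 'a" where
  "ldiv x = the_inv_into S (op x)"

lemma ldiv_closed [simp]: "x \<in> S \<Longrightarrow> z \<in> S \<Longrightarrow> ldiv x z \<in> S"
  unfolding ldiv_def using bij_op[of x] by (metis bij_betw_apply bij_betw_the_inv_into)

lemma op_ldiv [simp]: "x \<in> S \<Longrightarrow> z \<in> S \<Longrightarrow> op x (ldiv x z) = z"
  unfolding ldiv_def using bij_op[of x] by (metis bij_betw_def f_the_inv_into_f)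

lemma ldiv_op [simp]: "x \<in> S \<Longrightarrow> z \<in> S \<Longrightarrow> ldiv x (op x z) = z"
  unfolding ldiv_def using bij_op[of x] by (metis bij_betw_def the_inv_into_f_f)

lemma image_mset_op_ldiv:
  "x \<in> S \<Longrightarrow> set_mset M \<subseteq> S \<Longrightarrow> image_mset (op x) (image_mset (ldiv x) M) = M"
  by (induction M) auto

lemma image_mset_ldiv_op:
  "x \<in> S \<Longrightarrow> set_mset M \<subseteq> S \<Longrightarrow> image_mset (ldiv x) (image_mset (op x) M) = M"
  by (induction M) auto

lemma ldiv_cycle_identity:
  assumes "s \<in> S" "t \<in> S" "z \<in> S"
  shows "ldiv s (ldiv (op s t) z) = ldiv t (ldiv (op t s) z)"
proof -
  define a where "a = ldiv s (ldiv (op s t) z)"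
  have "a \<in> S" using assms by (simp add: a_def)
  have "op (op t s) (op t a) = z"
    using assms cycle_identity[OF assms(1,2) \<open>a \<in> S\<close>] by (simp add: a_def)
  then have "ldiv t (ldiv (op t s) z) = a"
    using assms \<open>a \<in> S\<close> by force
  then show ?thesis by (simp add: a_def)
qed

fun word_mset :: "'a list \<Rightarrow> 'a multiset" where
  "word_mset [] = {#}"
| "word_mset (x # w) = add_mset x (image_mset (ldiv x) (word_mset w))"

primrec act :: "'a list \<Rightarrow> 'a \<Rightarrow> 'a" where
  "act [] = id"
| "act (x # w) = act w \<circ> op x"

primrec act_inv :: "'a list \<Rightarrow> 'a \<Rightarrow> 'a" where
  "act_inv [] = id"
| "act_inv (x # w) = ldiv x \<circ> act_inv w"

lemma word_mset_subset: "w \<in> lists S \<Longrightarrow> set_mset (word_mset w) \<subseteq> S"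
  by (induction w) auto

lemma size_word_mset [simp]: "size (word_mset w) = length w"
  by (induction w) auto

lemma bij_act: "w \<in> lists S \<Longrightarrow> bij_betw (act w) S S"
  by (induction w) (auto intro: bij_betw_trans bij_op)

lemma act_inv_act: "w \<in> lists S \<Longrightarrow> u \<in> S \<Longrightarrow> act_inv w (act w u) = u"
  by (induction w arbitrary: u) auto

lemma act_append: "act (v @ w) = act w \<circ> act v"
  by (induction v) auto

lemma word_mset_append: "word_mset (v @ w) = word_mset v + image_mset (act_inv v) (word_mset w)"
  by (induction v) (auto simp: multiset.map_comp comp_def)

lemma word_mset_snoc: "word_mset (w @ [z]) = add_mset (act_inv w z) (word_mset w)"
  by (simp add: word_mset_append)

lemma word_mset_surj: "set_mset M \<subseteq> S \<Longrightarrow> \<exists>w\<in>lists S. word_mset w = M"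
proof (induction M)
  case empty
  show ?case by (intro bexI[of _ "[]"]) auto
next
  case (add x M)
  then obtain w where w: "w \<in> lists S" "word_mset w = M" and "x \<in> S" by auto
  then have "act w x \<in> S" using bij_act bij_betw_apply by metis
  then show ?case
    using w \<open>x \<in> S\<close> act_inv_act by (intro bexI[of _ "w @ [act w x]"]) (auto simp: word_mset_snoc)
qed

lemma word_mset_Cons_cancel:
  assumes "x \<in> S" "v \<in> lists S" "w \<in> lists S" "word_mset (x # v) = word_mset (x # w)"
  shows "word_mset v = word_mset w"
proof -
  have "image_mset (ldiv x) (word_mset v) = image_mset (ldiv x) (word_mset w)"
    using assms(4) by simp
  then show ?thesis
    by (metis assms(1-3) image_mset_op_ldiv word_mset_subset)
qed

lemma word_mset_Cons_exchange:
  assumes S: "x \<in> S" "y \<in> S" "v \<in> lists S" "w \<in> lists S"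
    and "x \<noteq> y" and eq: "word_mset (x # v) = word_mset (y # w)"
  obtains r where "r \<in> lists S"
    "word_mset v = word_mset (op x y # r)" "word_mset w = word_mset (op y x # r)"
proof -
  have v_sub: "set_mset (word_mset v) \<subseteq> S" and w_sub: "set_mset (word_mset w) \<subseteq> S"
    using S word_mset_subset by auto
  define R where "R = image_mset (ldiv x) (word_mset v) - {#y#}"
  have "y \<in># image_mset (ldiv x) (word_mset v)"
    using eq \<open>x \<noteq> y\<close> by (metis word_mset.simps(2) insert_noteq_member)
  then have Rx: "image_mset (ldiv x) (word_mset v) = add_mset y R"
    by (simp add: R_def)
  then have Ry: "image_mset (ldiv y) (word_mset w) = add_mset x R"
    using eq by (simp add: add_mset_commute)
  have "set_mset (image_mset (ldiv x) (word_mset v)) \<subseteq> S"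
    using v_sub S(1) by auto
  then have R_sub: "set_mset R \<subseteq> S"
    using Rx by simp
  have v_R: "word_mset v = add_mset (op x y) (image_mset (op x) R)"
    using image_mset_op_ldiv[OF S(1) v_sub] Rx by simp
  have w_R: "word_mset w = add_mset (op y x) (image_mset (op y) R)"
    using image_mset_op_ldiv[OF S(2) w_sub] Ry by simp
  have tails_eq: "image_mset (op (op x y)) (image_mset (op x) R) = image_mset (op (op y x)) (image_mset (op y) R)"
    unfolding multiset.map_comp comp_def
    using R_sub S cycle_identity by (intro image_mset_cong) auto
  have "set_mset (image_mset (op (op x y)) (image_mset (op x) R)) \<subseteq> S"
    using R_sub S by auto
  then obtain r where r: "r \<in> lists S" "word_mset r = image_mset (op (op x y)) (image_mset (op x) R)"
    using word_mset_surj by blast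
  have "set_mset (image_mset (op x) R) \<subseteq> S" "set_mset (image_mset (op y) R) \<subseteq> S"
    using R_sub S by auto
  note cancel = image_mset_ldiv_op[OF _ this(1)] image_mset_ldiv_op[OF _ this(2)]
  have "word_mset v = word_mset (op x y # r)"
    using v_R r(2) S cancel(1) by simp
  moreover have "word_mset w = word_mset (op y x # r)"
    using w_R r(2) S cancel(2) unfolding tails_eq by simp
  ultimately show ?thesis
    using that r(1) by blast
qed

theorem act_eq_if_word_mset_eq:
  "v \<in> lists S \<Longrightarrow> w \<in> lists S \<Longrightarrow> word_mset v = word_mset w \<Longrightarrow> u \<in> S \<Longrightarrow> act v u = act w u"
proof (induction "length v" arbitrary: v w u)
  case 0
  then show ?case by (metis length_0_conv size_word_mset)
next
  case (Suc n)
  have "length w = Suc n"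
    using Suc.hyps(2) Suc.prems(3) by (metis size_word_mset)
  then obtain y w' where w: "w = y # w'" "length w' = n"
    by (cases w) auto
  obtain x v' where v: "v = x # v'" "length v' = n"
    using Suc.hyps(2) by (cases v) auto
  have S: "x \<in> S" "y \<in> S" "v' \<in> lists S" "w' \<in> lists S"
    using Suc.prems(1,2) v w by auto
  have eq: "word_mset (x # v') = word_mset (y # w')"
    using Suc.prems(3) v w by simp
  note IH = Suc.hyps(1)[OF v(2)[symmetric]] Suc.hyps(1)[OF w(2)[symmetric]]
  show ?case
  proof (cases "x = y")
    case True
    then have "word_mset v' = word_mset w'"
      using word_mset_Cons_cancel[OF S(1,3,4)] eq by simp
    then have "act v' (op x u) = act w' (op x u)"
      using IH(1)[OF S(3,4)] S(1) Suc.prems(4) by simp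
    then show ?thesis
      using v w True by simp
  next
    case False
    then obtain r where r: "r \<in> lists S"
      "word_mset v' = word_mset (op x y # r)" "word_mset w' = word_mset (op y x # r)"
      using word_mset_Cons_exchange[OF S(1-4) False eq] by blast
    note S = S Suc.prems(4)
    have "act v u = act r (op (op x y) (op x u))"
      using IH(1)[OF S(3) _ r(2)] r(1) S v by simp
    also have "\<dots> = act r (op (op y x) (op y u))"
      using cycle_identity S by simp
    also have "\<dots> = act w u"
      using IH(2)[OF S(4) _ r(3)] r(1) S w by simp
    finally show ?thesis .
  qed
qed

lemma word_mset_eq_if_mrel: "mrel S op v w \<Longrightarrow> word_mset v = word_mset w"
proof (induction rule: mrel.induct)
  case (base xs ys s t)
  have "image_mset (ldiv s \<circ> ldiv (op s t)) (word_mset ys)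
      = image_mset (ldiv t \<circ> ldiv (op t s)) (word_mset ys)"
    using base word_mset_subset[of ys] ldiv_cycle_identity by (intro image_mset_cong) auto
  then have "word_mset ([s, op s t] @ ys) = word_mset ([t, op t s] @ ys)"
    using base by (simp add: multiset.map_comp add_mset_commute)
  then show ?case by (simp only: word_mset_append)
qed auto

lemma Tmap_funpow_closed: "s \<in> S \<Longrightarrow> (Tmap op ^^ i) s \<in> S"
  by (induction i) (auto simp: Tmap_def)

lemma bracket_word_in_lists: "s \<in> S \<Longrightarrow> bracket_word op n s \<in> lists S"
  using Tmap_funpow_closed by auto

lemma word_mset_bracket_word: "s \<in> S \<Longrightarrow> word_mset (bracket_word op n s) = replicate_mset n s"
proof (induction n arbitrary: s)
  case (Suc n)
  have "Tmap op s \<in> S" "ldiv s (Tmap op s) = s"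
    using Suc.prems by (simp_all add: Tmap_def)
  then show ?case
    unfolding bracket_word_Suc using Suc by simp
qed simp

lemma act_bracket_word: "act (bracket_word op n s) = psik op n s"
  by (induction n) (simp_all add: act_append)

lemma bij_psik: "s \<in> S \<Longrightarrow> bij_betw (psik op n s) S S"
  using bij_act[OF bracket_word_in_lists] act_bracket_word by metis

lemma psik_closed [simp]: "s \<in> S \<Longrightarrow> t \<in> S \<Longrightarrow> psik op n s t \<in> S"
  using bij_psik bij_betw_apply by metis

lemma word_mset_bracket_word_psik:
  assumes "s \<in> S" "t \<in> S"
  shows "word_mset (bracket_word op n s @ bracket_word op n (psik op n s t))
    = replicate_mset n s + replicate_mset n t"
proof -
  have "act_inv (bracket_word op n s) (psik op n s t) = t"
    using act_inv_act[OF bracket_word_in_lists] assms act_bracket_word by metis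
  then show ?thesis
    using assms by (simp add: word_mset_append word_mset_bracket_word)
qed

lemma cycle_set_psik: "cycle_set S (psik op n)"
  unfolding cycle_set_def
proof (intro conjI ballI bij_psik)
  fix s t u assume S: "s \<in> S" "t \<in> S" "u \<in> S"
  have "psik op n (psik op n s t) (psik op n s u)
      = act (bracket_word op n s @ bracket_word op n (psik op n s t)) u"
    by (simp add: act_append act_bracket_word)
  also have "\<dots> = act (bracket_word op n t @ bracket_word op n (psik op n t s)) u"
  proof (rule act_eq_if_word_mset_eq)
    show "bracket_word op n s @ bracket_word op n (psik op n s t) \<in> lists S"
      "bracket_word op n t @ bracket_word op n (psik op n t s) \<in> lists S"
      using S bracket_word_in_lists by simp_all
    show "word_mset (bracket_word op n s @ bracket_word op n (psik op n s t))
      = word_mset (bracket_word op n t @ bracket_word op n (psik op n t s))"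
      using S word_mset_bracket_word_psik by (simp add: add.commute)
  qed fact
  also have "\<dots> = psik op n (psik op n t s) (psik op n t u)"
    by (simp add: act_append act_bracket_word)
  finally show "psik op n (psik op n s t) (psik op n s u) = psik op n (psik op n t s) (psik op n t u)" .
qed

lemma inj_on_bracket:
  assumes "k \<ge> 1"
  shows "inj_on (bracket S op k) S"
proof (rule inj_onI)
  fix s t assume S: "s \<in> S" "t \<in> S" and "bracket S op k s = bracket S op k t"
  then have "mrel S op (bracket_word op k s) (bracket_word op k t)"
    unfolding bracket_def mclass_def by (metis mem_Collect_eq mrel.refl)
  then have "replicate_mset k s = replicate_mset k t"
    using word_mset_eq_if_mrel word_mset_bracket_word S by metis
  then show "s = t"
    using assms by (metis in_replicate_mset less_le_trans zero_less_one)
qed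

end

theorem mainTheorem9:
  fixes S :: "'a set" and op :: "'a \<Rightarrow> 'a \<Rightarrow> 'a" and k :: nat
  assumes "cycle_set S op" and "finite S" and "k \<ge> 1"
  shows "cycle_set (bracket_set S op k) (star S op k)"
proof -
  interpret cycle_set_locale S op
    using assms(1) by unfold_locales
  have inj: "inj_on (bracket S op k) S"
    using inj_on_bracket[OF assms(3)] .
  show ?thesis
    unfolding bracket_set_def
    using cycle_set_image[OF cycle_set_psik inj] star_bracket[OF inj] by blast
qed

end
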